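(* For all $N\in\mathbb{Z}_{\geqslant 1}$, $$\prod_{n=1}^N n!\leqslant N^{\frac12(N+1)^2}e^{-\frac34(N^2-1)}.$$ *)

theory Defs
  imports Complex_Main
begin

end

theory Submission
  imports Defs
begin

text \<open>
  Taking logarithms, the claim says that \<open>\<Sum>n=1..N. ln n!\<close> is at most
  \<open>G N = (N+1)\<^sup>2/2 \<cdot> ln N - 3/4 \<cdot> (N\<^sup>2-1)\<close>. Both this and the Stirling-type bound
  \<open>ln n! \<le> 1 - n + (n+1/2) \<cdot> ln n\<close> follow by induction, since every increment
  reduces to the single estimate \<open>ln (x+1) - ln x \<ge> 2/(2x+1)\<close>, a consequence of
  \<open>ln (1+t) \<ge> 2t/(2+t)\<close>.
\<close>

lemma ln_add_one_ge:
  fixes t :: real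
  assumes "0 \<le> t"
  shows "2 * t / (2 + t) \<le> ln (1 + t)"
proof -
  let ?f = "\<lambda>t::real. ln (1 + t) - 2 * t / (2 + t)"
  have "?f 0 \<le> ?f t"
  proof (rule DERIV_nonneg_imp_nondecreasing[OF assms])
    fix s :: real
    assume s: "0 \<le> s" "s \<le> t"
    have "DERIV ?f s :> (1 / (1 + s) - (2 * (2 + s) - 2 * s) / (2 + s)^2)"
      using s by (auto intro!: derivative_eq_intros simp: power2_eq_square)
    moreover have "1 / (1 + s) - (2 * (2 + s) - 2 * s) / (2 + s)^2 = s^2 / ((1 + s) * (2 + s)^2)"
      using s by (simp add: divide_simps power2_eq_square) (simp add: algebra_simps)
    ultimately show "\<exists>y. DERIV ?f s :> y \<and> y \<ge> 0"
      using s by auto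
  qed
  then show ?thesis by simp
qed

lemma ln_add_one_diff_ge:
  fixes x :: real
  assumes "0 < x"
  shows "2 / (2 * x + 1) \<le> ln (x + 1) - ln x"
proof -
  have "2 / (2 * x + 1) = 2 * (1 / x) / (2 + 1 / x)"
    using assms by (simp add: field_simps)
  also have "\<dots> \<le> ln (1 + 1 / x)"
    using assms by (intro ln_add_one_ge) simp
  also have "1 + 1 / x = (x + 1) / x"
    using assms by (simp add: field_simps)
  finally show ?thesis
    using assms by (simp add: ln_div)
qed

lemma ln_fact_le:
  assumes "1 \<le> m"
  shows "ln (fact m) \<le> 1 - real m + (real m + 1/2) * ln (real m)"
  using assms
proof (induction m rule: dec_induct)
  case base
  then show ?case by simp
next
  case (step m)
  define x where "x = real m"
  have "0 < x" using step.hyps by (simp add: x_def)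
  have Suc_eq: "real (Suc m) = x + 1" by (simp add: x_def)
  have "1 = (x + 1/2) * (2 / (2 * x + 1))"
    using \<open>0 < x\<close> by (simp add: field_simps)
  also have "\<dots> \<le> (x + 1/2) * (ln (x + 1) - ln x)"
    using \<open>0 < x\<close> ln_add_one_diff_ge by (intro mult_left_mono) auto
  finally have increment: "1 \<le> (x + 1/2) * (ln (x + 1) - ln x)" .
  have "ln (fact (Suc m)) = ln (x + 1) + ln (fact m)"
    by (simp add: x_def ln_mult add.commute)
  also have "\<dots> \<le> ln (x + 1) + (1 - x + (x + 1/2) * ln x)"
    using step.IH by (simp add: x_def)
  also have "\<dots> \<le> 1 - (x + 1) + (x + 1 + 1/2) * ln (x + 1)"
    using increment by (simp add: algebra_simps)
  finally show ?case unfolding Suc_eq x_def[symmetric] .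
qed

lemma sum_ln_fact_le:
  assumes "1 \<le> N"
  shows "(\<Sum>n=1..N. ln (fact n)) \<le> (real N + 1)^2 / 2 * ln (real N) - 3/4 * (real N ^ 2 - 1)"
  using assms
proof (induction N rule: dec_induct)
  case base
  then show ?case by simp
next
  case (step N)
  define x where "x = real N"
  have "0 < x" using step.hyps by (simp add: x_def)
  have Suc_eq: "real (Suc N) = x + 1" by (simp add: x_def)
  have "x + 3/2 \<le> (x + 1)^2 * (2 / (2 * x + 1))"
    using \<open>0 < x\<close> by (simp add: field_simps power2_eq_square)
  also have "\<dots> \<le> (x + 1)^2 * (ln (x + 1) - ln x)"
    using \<open>0 < x\<close> ln_add_one_diff_ge by (intro mult_left_mono) auto
  finally have increment: "x + 3/2 \<le> (x + 1)^2 * (ln (x + 1) - ln x)" .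
  have "(\<Sum>n=1..Suc N. ln (fact n)) = (\<Sum>n=1..N. ln (fact n)) + ln (fact (Suc N))"
    by simp
  also have "\<dots> \<le> ((x + 1)^2 / 2 * ln x - 3/4 * (x^2 - 1))
                  + (1 - (x + 1) + (x + 1 + 1/2) * ln (x + 1))"
    using step.IH ln_fact_le[of "Suc N"] unfolding Suc_eq x_def[symmetric]
    by (intro add_mono) simp_all
  also have "\<dots> \<le> (x + 1 + 1)^2 / 2 * ln (x + 1) - 3/4 * ((x + 1)^2 - 1)"
    using increment by (simp add: field_simps power2_eq_square)
  finally show ?case unfolding Suc_eq x_def[symmetric] .
qed

theorem lemma4:
  fixes N :: nat
  assumes "N \<ge> 1"
  shows "(\<Prod>n=1..N. real (fact n)) \<le>
         real N powr ((real N + 1)^2 / 2) * exp (- (3/4) * (real N ^ 2 - 1))"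
proof -
  have "(\<Prod>n=1..N. real (fact n)) = exp (\<Sum>n=1..N. ln (fact n))"
    by (simp add: exp_sum)
  also have "\<dots> \<le> exp ((real N + 1)^2 / 2 * ln (real N) - 3/4 * (real N ^ 2 - 1))"
    using sum_ln_fact_le[OF assms] by simp
  also have "\<dots> = exp (ln (real N) * ((real N + 1)^2 / 2)) * exp (- (3/4) * (real N ^ 2 - 1))"
    by (simp add: exp_add[symmetric] algebra_simps)
  also have "\<dots> = real N powr ((real N + 1)^2 / 2) * exp (- (3/4) * (real N ^ 2 - 1))"
    using assms by (simp add: powr_def)
  finally show ?thesis .
qed

end
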